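(* For any choice of almost disjoint family and enumeration in the definition of $\rho^{[0,1]}$, we have $\rho^{[0,1]}\leq_K\rho_{\mathrm{conv}}$ and $\rho_{\mathrm{conv}}\not\leq_K\rho^{[0,1]}$.
   Context: $\mathrm{conv}$ is the ideal on $\mathbb{Q}\cap[0,1]$ of all sets covered by the ranges of finitely many sequences in $\mathbb{Q}\cap[0,1]$ convergent in $[0,1]$; $\mathrm{conv}^+$ is its complement in $\mathcal{P}(\mathbb{Q}\cap[0,1])$. $\rho_{\mathrm{conv}}\colon\mathrm{conv}^+\to[\mathbb{Q}\cap[0,1]]^\omega$ is $\rho_{\mathrm{conv}}(A)=A$ (domain sets are subsets of $\Omega=\mathbb{Q}\cap[0,1]$). Definition of $\rho^{[0,1]}$: let $\mathcal{A}=\{A_\alpha:\alpha<\mathfrak{c}\}$ be an almost disjoint family on $\omega$ (pairwise distinct infinite subsets with pairwise finite intersections). Let $X$ be the set of all $x\colon\omega\times\omega\to[0,1]\cap\mathbb{Q}$ such that: (i) for every $p\in[0,1]$ there is an open neighborhood $U$ of $p$ with $x[(\omega\setminus[0,n])\times\omega]\not\subseteq U$ for all $n$; (ii) $x$ is injective; (iii) $x[(\omega\setminus[0,n])\times\omega]\notin\mathrm{conv}$ for all $n$. Fix an enumeration $X=\{x_\alpha:\alpha<\mathfrak{c}\}$. Let $\overline{\mathcal{A}}=\{A\setminus K:A\in\mathcal{A},K\in[\omega]^{<\omega}\}$ and $\rho^{[0,1]}\colon\overline{\mathcal{A}}\to[[0,1]\cap\mathbb{Q}]^\omega$, $\rho^{[0,1]}(A_\alpha\setminus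 K)=x_\alpha[(\omega\setminus[0,\max(A_\alpha\cap K)])\times\omega]$, with $\max\emptyset=0$; here $[0,m]=\{0,\dots,m\}$ (domain sets are subsets of $\Omega=\omega$). Katětov order: for $\rho_i\colon\mathcal{F}_i\to[\Lambda_i]^\omega$ with $\mathcal{F}_i\subseteq[\Omega_i]^\omega$, $\rho_2\leq_K\rho_1$ if there is $f\colon\Lambda_1\to\Lambda_2$ such that for every $F_1\in\mathcal{F}_1$ there is $F_2\in\mathcal{F}_2$ such that for every finite $K_1\subseteq\Omega_1$ there is a finite $K_2\subseteq\Omega_2$ with $\rho_2(F_2\setminus K_2)\subseteq f[\rho_1(F_1\setminus K_1)]$. *)

theory Defs
  imports Complex_Main
begin

definition Q01 :: "real set" where
  "Q01 = {q. q \<in> \<rat> \<and> 0 \<le> q \<and> q \<le> 1}"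

definition conv_seq :: "(nat \<Rightarrow> real) \<Rightarrow> bool" where
  "conv_seq s \<longleftrightarrow> range s \<subseteq> Q01 \<and> (\<exists>L. 0 \<le> L \<and> L \<le> 1 \<and> s \<longlonglongrightarrow> L)"

definition conv :: "real set set" where
  "conv = {A. A \<subseteq> Q01 \<and> (\<exists>S. finite S \<and> (\<forall>s\<in>S. conv_seq s) \<and> A \<subseteq> (\<Union>s\<in>S. range s))}"

definition conv_plus :: "real set set" where
  "conv_plus = Pow Q01 - conv"

definition rho_conv :: "real set \<Rightarrow> real set" where
  "rho_conv A = A"

text \<open>Katetov order: \<open>katetov_le \<rho>2 F2 \<Omega>2 \<Lambda>2 \<rho>1 F1 \<Omega>1 \<Lambda>1\<close> means \<open>\<rho>2 \<le>_K \<rho>1\<close>.\<close>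
definition katetov_le ::
  "('c set \<Rightarrow> 'd set) \<Rightarrow> 'c set set \<Rightarrow> 'c set \<Rightarrow> 'd set \<Rightarrow>
   ('a set \<Rightarrow> 'b set) \<Rightarrow> 'a set set \<Rightarrow> 'a set \<Rightarrow> 'b set \<Rightarrow> bool" where
  "katetov_le \<rho>2 F2 \<Omega>2 \<Lambda>2 \<rho>1 F1 \<Omega>1 \<Lambda>1 \<longleftrightarrow>
     (\<exists>f. (\<forall>l\<in>\<Lambda>1. f l \<in> \<Lambda>2) \<and>
        (\<forall>S1\<in>F1. \<exists>S2\<in>F2. \<forall>K1. finite K1 \<and> K1 \<subseteq> \<Omega>1 \<longrightarrow>
            (\<exists>K2. finite K2 \<and> K2 \<subseteq> \<Omega>2 \<and> \<rho>2 (S2 - K2) \<subseteq> f ` \<rho>1 (S1 - K1))))"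

text \<open>Almost disjoint family indexed by a set of size continuum (the reals).\<close>
definition almost_disjoint_family :: "(real \<Rightarrow> nat set) \<Rightarrow> bool" where
  "almost_disjoint_family A \<longleftrightarrow> inj A \<and> (\<forall>a. infinite (A a)) \<and>
     (\<forall>a b. a \<noteq> b \<longrightarrow> finite (A a \<inter> A b))"

definition tail_img :: "(nat \<times> nat \<Rightarrow> real) \<Rightarrow> nat \<Rightarrow> real set" where
  "tail_img x n = x ` ({k. n < k} \<times> UNIV)"

definition Xset :: "(nat \<times> nat \<Rightarrow> real) set" where
  "Xset = {x. range x \<subseteq> Q01 \<and>
     (\<forall>p\<in>{0..1}. \<exists>U. open U \<and> p \<in> U \<and> (\<forall>n. \<not> tail_img x n \<subseteq> U)) \<and>
     inj x \<and>
     (\<forall>n. tail_img x n \<notin> conv)}"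

definition max0 :: "nat set \<Rightarrow> nat" where
  "max0 S = (if S = {} then 0 else Max S)"

definition Abar :: "(real \<Rightarrow> nat set) \<Rightarrow> nat set set" where
  "Abar A = {A a - K | a K. finite K}"

text \<open>\<open>\<rho>^{[0,1]}(A_\<alpha> \ K) = x_\<alpha>[(\<omega> \ [0,max(A_\<alpha> \<inter> K)]) \<times> \<omega>]\<close>; note
  \<open>A_\<alpha> \<inter> K = A_\<alpha> - (A_\<alpha> - K)\<close>, so this is well defined.\<close>
definition rho01 :: "(real \<Rightarrow> nat set) \<Rightarrow> (real \<Rightarrow> nat \<times> nat \<Rightarrow> real) \<Rightarrow> nat set \<Rightarrow> real set" where
  "rho01 A x S = (let a = (SOME a. \<exists>K. finite K \<and> S = A a - K)
                  in tail_img (x a) (max0 (A a - S)))"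

end

(* A set B of rationals in [0,1] belongs to conv iff it has only finitely many accumulation
   points: a convergent sequence accumulates only at its limit, and conversely B splits into
   finitely many pieces, each converging to its nearest accumulation point.

   For rho^[0,1] <=_K rho_conv the identity works.  A conv-positive set S has two distinct
   accumulation points, so some x_alpha in X takes all its values in S: the first two entries of
   every column lie near these two points (condition (i)), and the remaining entries of column k
   converge to the k-th of infinitely many distinct accumulation points of S (condition (iii)).
   As x_alpha is injective, its tails, i.e. the sets rho^[0,1](A_alpha - {m}), eventually avoid
   any finite set.

   For rho_conv not <=_K rho^[0,1], let f witness the reduction.  By compactness of [0,1] there
   are points c1, c2 such that for every r > 0 the rationals of [0,1/3] mapped by f into the
   r-ball around c1 still have infinitely many accumulation points, and likewise for [2/3,1] and
   c2.  Building x_alpha with column k inside these pieces for r = 1/(k+1), f maps the tails of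
   x_alpha ever closer to {c1, c2}; a set almost contained in all these images accumulates only
   at c1 and c2, hence lies in conv. *)

theory Submission
  imports Defs "HOL-Analysis.Analysis"
begin

section \<open>Accumulation points\<close>

lemma limpt_range_LIMSEQ:
  fixes s :: "nat \<Rightarrow> 'a::metric_space"
  assumes "s \<longlonglongrightarrow> L" and "p islimpt range s"
  shows "p = L"
proof -
  obtain r where "strict_mono r" and "(s \<circ> r) \<longlonglongrightarrow> p"
    using islimpt_range_imp_convergent_subsequence[OF assms(2)] by blast
  moreover have "(s \<circ> r) \<longlonglongrightarrow> L"
    using LIMSEQ_subseq_LIMSEQ[OF assms(1) \<open>strict_mono r\<close>] .
  ultimately show ?thesis using LIMSEQ_unique by blast
qed

lemma infinite_if_infinite_limpts:
  fixes S :: "'a::t1_space set"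
  assumes "infinite {q. q islimpt S}"
  shows "infinite S"
proof
  assume "finite S"
  then have "{q. q islimpt S} = {}" using islimpt_finite by blast
  with assms show False by simp
qed

lemma infinite_limpts_Icc_Int_Rats:
  fixes a b :: real
  assumes "a < b"
  shows "infinite {p. p islimpt ({a..b} \<inter> \<rat>)}"
proof -
  have "closure ({a..b} \<inter> \<rat>) = {a..b}"
    using closure_convex_Int_superset[of "{a..b}" \<rat>] assms by (simp add: Rats_closure_real)
  then have "{a..b} - \<rat> \<subseteq> {p. p islimpt ({a..b} \<inter> \<rat>)}"
    unfolding closure_def by blast
  moreover have "uncountable ({a..b} - \<rat>)"
  proof
    assume "countable ({a..b} - \<rat>)"
    then have "countable ({a..b} - \<rat> \<union> \<rat>)" using countable_rat by (rule countable_Un)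
    then have "countable {a..b}" by (rule countable_subset[rotated]) blast
    with assms show False using uncountable_closed_interval by blast
  qed
  ultimately show ?thesis using countable_finite countable_subset by blast
qed

lemma limpts_concentrate:
  fixes f :: "'a::topological_space \<Rightarrow> 'b::metric_space"
  assumes "compact K" and "f ` B \<subseteq> K" and "infinite {q. q islimpt B}"
  obtains c where "\<And>r. r > 0 \<Longrightarrow> infinite {q. q islimpt (B \<inter> f -` ball c r)}"
proof (rule ccontr)
  assume "\<not> thesis"
  with that have "\<forall>c. \<exists>r>0. finite {q. q islimpt (B \<inter> f -` ball c r)}" by blast
  then obtain r where r: "\<And>c. r c > 0" and fin: "\<And>c. finite {q. q islimpt (B \<inter> f -` ball c (r c))}"
    by metis
  from \<open>compact K\<close> obtain C where "C \<subseteq> K" "finite C" and cover: "K \<subseteq> (\<Union>c\<in>C. ball c (r c))"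
    by (rule compactE_image[where f = "\<lambda>c. ball c (r c)"]) (use r in auto)
  have split: "B \<subseteq> (\<Union>c\<in>C. B \<inter> f -` ball c (r c))" using cover assms(2) by blast
  have "{q. q islimpt B} \<subseteq> (\<Union>c\<in>C. {q. q islimpt (B \<inter> f -` ball c (r c))})"
  proof
    fix q assume "q \<in> {q. q islimpt B}"
    then have "q islimpt (\<Union>c\<in>C. B \<inter> f -` ball c (r c))" using islimpt_subset[OF _ split] by simp
    then show "q \<in> (\<Union>c\<in>C. {q. q islimpt (B \<inter> f -` ball c (r c))})"
      unfolding islimpt_finite_union_iff[OF \<open>finite C\<close>] by blast
  qed
  then have "finite {q. q islimpt B}" using \<open>finite C\<close> fin by (simp add: finite_subset)
  with assms(3) show False by simp
qed

lemma limpt_in_closed_if_almost_covered: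
  fixes S :: "'a::metric_space set"
  assumes "closed C" and covered: "\<And>e. e > 0 \<Longrightarrow> \<exists>K. finite K \<and> S - K \<subseteq> (\<Union>c\<in>C. ball c e)"
    and "z islimpt S"
  shows "z \<in> C"
proof (rule ccontr)
  assume "z \<notin> C"
  moreover have "open (- C)" using \<open>closed C\<close> by (simp add: closed_def)
  ultimately obtain \<delta> where "\<delta> > 0" and \<delta>: "ball z \<delta> \<subseteq> - C"
    using open_contains_ball by blast
  then obtain K where "finite K" and K: "S - K \<subseteq> (\<Union>c\<in>C. ball c (\<delta>/2))"
    using covered[of "\<delta>/2"] by auto
  have "S \<inter> ball z (\<delta>/2) \<subseteq> K"
  proof
    fix w assume w: "w \<in> S \<inter> ball z (\<delta>/2)"
    show "w \<in> K"
    proof (rule ccontr)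
      assume "w \<notin> K"
      then obtain c where "c \<in> C" "dist c w < \<delta>/2" using w K by auto
      moreover have "dist z w < \<delta>/2" using w by simp
      ultimately have "c \<in> ball z \<delta>"
        using dist_triangle[of z c w] dist_commute[of w c] by simp
      with \<delta> \<open>c \<in> C\<close> show False by blast
    qed
  qed
  then have "finite (S \<inter> ball z (\<delta>/2))" using \<open>finite K\<close> finite_subset by blast
  with \<open>z islimpt S\<close> \<open>\<delta> > 0\<close> show False unfolding islimpt_eq_infinite_ball by simp
qed

section \<open>The ideal conv via accumulation points\<close>

lemma conv_imp_finite_limpts:
  assumes "B \<in> conv"
  shows "finite {p. p islimpt B}"
proof -
  obtain S where S: "finite S" "\<forall>s\<in>S. conv_seq s" "B \<subseteq> (\<Union>s\<in>S. range s)"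
    using assms unfolding conv_def by auto
  have "{p. p islimpt B} \<subseteq> lim ` S"
  proof
    fix p assume "p \<in> {p. p islimpt B}"
    then have "p islimpt (\<Union>s\<in>S. range s)" using S(3) islimpt_subset by auto
    then obtain s where s: "s \<in> S" "p islimpt range s"
      using islimpt_finite_union_iff[OF S(1), of p range] by blast
    then obtain L where "s \<longlonglongrightarrow> L" using S(2) unfolding conv_seq_def by auto
    with s have "p = lim s" using limpt_range_LIMSEQ limI by metis
    with s show "p \<in> lim ` S" by blast
  qed
  then show ?thesis using S(1) finite_subset by blast
qed

lemma conv_UN:
  assumes "finite I" and "\<And>i. i \<in> I \<Longrightarrow> B i \<in> conv"
  shows "(\<Union>i\<in>I. B i) \<in> conv"
proof -
  have "\<forall>i\<in>I. \<exists>S. finite S \<and> (\<forall>s\<in>S. conv_seq s) \<and> B i \<subseteq> (\<Union>s\<in>S. range s)"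
    using assms(2) unfolding conv_def by blast
  then obtain S where S: "\<forall>i\<in>I. finite (S i) \<and> (\<forall>s\<in>S i. conv_seq s) \<and> B i \<subseteq> (\<Union>s\<in>S i. range s)"
    by (metis bchoice)
  have "(\<Union>i\<in>I. B i) \<subseteq> Q01" using assms(2) unfolding conv_def by blast
  moreover have "finite (\<Union>i\<in>I. S i)" using assms(1) S by blast
  moreover have "\<forall>s\<in>(\<Union>i\<in>I. S i). conv_seq s" using S by blast
  moreover have "(\<Union>i\<in>I. B i) \<subseteq> (\<Union>s\<in>(\<Union>i\<in>I. S i). range s)" using S by blast
  ultimately show ?thesis unfolding conv_def by blast
qed

lemma finite_in_conv:
  assumes "finite B" and "B \<subseteq> Q01"
  shows "B \<in> conv"
proof -
  have "conv_seq (\<lambda>n. b)" if "b \<in> B" for b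
    using that assms(2) unfolding conv_seq_def Q01_def by auto
  then show ?thesis unfolding conv_def
    using assms by (intro CollectI conjI exI[of _ "(\<lambda>b n. b) ` B"]) auto
qed

lemma conv_if_tendsto_outside_finite:
  assumes "B \<subseteq> Q01" and "p \<in> {0..1}"
    and "\<And>e. e > 0 \<Longrightarrow> finite {b\<in>B. e \<le> dist b p}"
  shows "B \<in> conv"
proof (cases "finite B")
  case True
  then show ?thesis using assms(1) by (rule finite_in_conv)
next
  case False
  have "B \<subseteq> \<rat>" using assms(1) unfolding Q01_def by blast
  then have "countable B" using countable_rat by (rule countable_subset)
  then have bij: "bij_betw (from_nat_into B) UNIV B"
    using False by (rule bij_betw_from_nat_into)
  define s where "s = from_nat_into B"
  have inj: "inj s" and range: "range s = B" using bij unfolding s_def bij_betw_def by auto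
  have "s \<longlonglongrightarrow> p"
  proof (rule tendstoI)
    fix e :: real assume "e > 0"
    have "{n. \<not> dist (s n) p < e} = s -` {b\<in>B. e \<le> dist b p}"
      using range by auto
    then have "finite {n. \<not> dist (s n) p < e}"
      using finite_vimageI[OF assms(3)[OF \<open>e > 0\<close>] inj] by simp
    then have "eventually (\<lambda>n. dist (s n) p < e) cofinite"
      by (simp add: eventually_cofinite)
    then show "eventually (\<lambda>n. dist (s n) p < e) sequentially"
      by (simp add: cofinite_eq_sequentially)
  qed
  then have "conv_seq s"
    using range assms(1,2) unfolding conv_seq_def by auto
  then show ?thesis
    using range assms(1) unfolding conv_def by (intro CollectI conjI exI[of _ "{s}"]) auto
qed

lemma limpt_Q01_in_Icc:
  assumes "B \<subseteq> Q01" and "p islimpt B"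
  shows "p \<in> {0..1}"
proof -
  have "B \<subseteq> {0..1}" using assms(1) unfolding Q01_def by auto
  then have "p islimpt {0..1::real}" using assms(2) islimpt_subset by blast
  then show ?thesis using closed_limpt[of "{0..1::real}"] by auto
qed

lemma finite_limpts_imp_conv:
  assumes B: "B \<subseteq> Q01" and fin: "finite {p. p islimpt B}"
  shows "B \<in> conv"
proof (cases "finite B")
  case True
  then show ?thesis using B by (rule finite_in_conv)
next
  case False
  define F where "F = {p. p islimpt B}"
  have "B \<subseteq> {0..1}" using B unfolding Q01_def by auto
  then have "F \<noteq> {}"
    using Heine_Borel_imp_Bolzano_Weierstrass[OF compact_Icc False] unfolding F_def by blast
  \<comment> \<open>Split \<open>B\<close> according to the nearest limit point; each piece converges to its point.\<close>
  define g where "g b = arg_min_on (\<lambda>q. dist b q) F" for b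
  have g: "g b \<in> F \<and> (\<forall>q\<in>F. dist b (g b) \<le> dist b q)" for b
    using arg_min_if_finite[OF fin[folded F_def] \<open>F \<noteq> {}\<close>, of "\<lambda>q. dist b q"]
    unfolding g_def by force
  define Bp where "Bp p = {b\<in>B. g b = p}" for p
  have pieces: "Bp p \<in> conv" if "p \<in> F" for p
  proof (rule conv_if_tendsto_outside_finite)
    show "Bp p \<subseteq> Q01" using B unfolding Bp_def by blast
    show "p \<in> {0..1}" using limpt_Q01_in_Icc[OF B] that unfolding F_def by blast
    fix e :: real assume "e > 0"
    show "finite {b\<in>Bp p. e \<le> dist b p}"
    proof (rule ccontr)
      let ?Far = "{b\<in>Bp p. e \<le> dist b p}"
      assume "infinite ?Far"
      moreover have "?Far \<subseteq> {0..1}" using B unfolding Bp_def Q01_def by auto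
      ultimately obtain z where z: "z islimpt ?Far"
        using Heine_Borel_imp_Bolzano_Weierstrass[OF compact_Icc] by blast
      then have "z islimpt B" by (rule islimpt_subset) (auto simp: Bp_def)
      then have "z \<in> F" unfolding F_def by simp
      from z \<open>e > 0\<close> obtain b where b: "b \<in> ?Far" "dist b z < e"
        unfolding islimpt_approachable by blast
      then have "dist b p \<le> dist b z" using g[of b] \<open>z \<in> F\<close> unfolding Bp_def by auto
      with b show False by simp
    qed
  qed
  have "B = (\<Union>p\<in>F. Bp p)" using g unfolding Bp_def by blast
  moreover have "(\<Union>p\<in>F. Bp p) \<in> conv" by (rule conv_UN[OF fin[folded F_def] pieces])
  ultimately show ?thesis by (rule ssubst)
qed

lemma conv_iff_finite_limpts:
  assumes "B \<subseteq> Q01"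
  shows "B \<in> conv \<longleftrightarrow> finite {p. p islimpt B}"
  using finite_limpts_imp_conv[OF assms] conv_imp_finite_limpts by blast

section \<open>Elements of X\<close>

lemma inj_choice_from_infinite_sets:
  fixes C :: "'i::countable \<Rightarrow> 'a set"
  assumes "\<And>i. infinite (C i)"
  obtains y where "inj y" and "\<And>i. y i \<in> C i"
proof -
  have "\<exists>z. \<forall>n. z n \<in> C (from_nat n) \<and> z n \<notin> z ` {..<n}"
  proof (rule dependent_wellorder_choice)
    fix z :: "nat \<Rightarrow> 'a" and n :: nat
    have "infinite (C (from_nat n) - z ` {..<n})" using assms by simp
    then have "C (from_nat n) - z ` {..<n} \<noteq> {}" by (rule infinite_imp_nonempty)
    then show "\<exists>r. r \<in> C (from_nat n) \<and> r \<notin> z ` {..<n}" by blast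
  next
    fix f g :: "nat \<Rightarrow> 'a" and n :: nat and r :: 'a
    assume "\<And>m. m < n \<Longrightarrow> f m = g m"
    then have "f ` {..<n} = g ` {..<n}" by (intro image_cong) auto
    then show "(r \<in> C (from_nat n) \<and> r \<notin> f ` {..<n}) = (r \<in> C (from_nat n) \<and> r \<notin> g ` {..<n})"
      by simp
  qed
  then obtain z where z: "\<forall>n. z n \<in> C (from_nat n) \<and> z n \<notin> z ` {..<n}" ..
  have "inj z"
  proof (rule linorder_injI)
    fix m n :: nat
    assume "m < n"
    then have "z m \<in> z ` {..<n}" by simp
    with z show "z m \<noteq> z n" by metis
  qed
  then have "inj (z \<circ> to_nat)" by (simp add: inj_compose)
  moreover have "(z \<circ> to_nat) i \<in> C i" for i using z[rule_format, of "to_nat i"] by simp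
  ultimately show ?thesis by (rule that)
qed

lemma Xset_memberI:
  fixes x :: "nat \<times> nat \<Rightarrow> real" and p :: "nat \<Rightarrow> real"
  assumes range: "range x \<subseteq> Q01" and "inj x"
    and "d > 0" and sep: "\<And>k. d \<le> dist (x (k,0)) (x (k,1))"
    and "inj p" and limpt: "\<And>k. p k islimpt x ` ({k} \<times> UNIV)"
  shows "x \<in> Xset"
proof -
  have not_in_ball: "\<not> tail_img x n \<subseteq> ball c (d/2)" for c n
  proof
    assume sub: "tail_img x n \<subseteq> ball c (d/2)"
    have "x (Suc n, 0) \<in> tail_img x n" "x (Suc n, 1) \<in> tail_img x n"
      unfolding tail_img_def by auto
    then have "dist c (x (Suc n, 0)) < d/2" "dist c (x (Suc n, 1)) < d/2"
      using sub by auto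
    then have "dist (x (Suc n, 0)) (x (Suc n, 1)) < d"
      using dist_triangle3[of "x (Suc n, 0)" "x (Suc n, 1)" c] by linarith
    with sep[of "Suc n"] show False by linarith
  qed
  have not_conv: "tail_img x n \<notin> conv" for n
  proof -
    have "p k islimpt tail_img x n" if "k \<in> {n<..}" for k
      using limpt[of k] by (rule islimpt_subset) (use that in \<open>auto simp: tail_img_def\<close>)
    then have "p ` {n<..} \<subseteq> {q. q islimpt tail_img x n}" by blast
    moreover have "infinite (p ` {n<..})"
      using \<open>inj p\<close> by (simp add: finite_image_iff inj_on_subset infinite_Ioi)
    ultimately have "infinite {q. q islimpt tail_img x n}" using finite_subset by blast
    moreover have "tail_img x n \<subseteq> Q01" using range unfolding tail_img_def by blast
    ultimately show ?thesis using conv_iff_finite_limpts by blast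
  qed
  have "\<exists>U. open U \<and> c \<in> U \<and> (\<forall>n. \<not> tail_img x n \<subseteq> U)" for c
    using not_in_ball \<open>d > 0\<close> by (intro exI[of _ "ball c (d/2)"]) auto
  then show ?thesis unfolding Xset_def using range \<open>inj x\<close> not_conv by blast
qed

lemma Xset_witness:
  fixes D :: "nat \<Rightarrow> real set"
  assumes DQ: "\<And>k. D k \<subseteq> Q01" and Dlimpts: "\<And>k. infinite {q. q islimpt D k}"
    and DL: "\<And>k. infinite (D k \<inter> L)" and DH: "\<And>k. infinite (D k \<inter> H)"
    and "d > 0" and sep: "\<And>a b. a \<in> L \<Longrightarrow> b \<in> H \<Longrightarrow> d \<le> dist a b"
  obtains x where "x \<in> Xset" and "\<And>k m. x (k,m) \<in> D k"
proof -
  obtain p where "inj p" and p: "\<And>k. p k \<in> {q. q islimpt D k}"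
    using inj_choice_from_infinite_sets[of "\<lambda>k. {q. q islimpt D k}"] Dlimpts by blast
  \<comment> \<open>Column \<open>k\<close>: a point of \<open>L\<close>, a point of \<open>H\<close>, then a sequence in \<open>D k\<close> converging to \<open>p k\<close>.\<close>
  define C where "C = (\<lambda>(k,m). if m = 0 then D k \<inter> L else if m = 1 then D k \<inter> H
                                else D k \<inter> ball (p k) (1 / real m) - {p k})"
  have Cinf: "infinite (C km)" for km
  proof (cases km)
    case (Pair k m)
    have "infinite (D k \<inter> ball (p k) (1 / real m))" if "m \<ge> 2"
      using p[of k] that unfolding islimpt_eq_infinite_ball by simp
    then show ?thesis using DL DH unfolding C_def Pair by auto
  qed
  then obtain x where "inj x" and x: "\<And>km. x km \<in> C km"
    using inj_choice_from_infinite_sets[of C] Cinf by blast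
  have xD: "x (k,m) \<in> D k" for k m using x[of "(k,m)"] unfolding C_def by (auto split: if_splits)
  have "p k islimpt x ` ({k} \<times> UNIV)" for k
    unfolding islimpt_approachable
  proof (intro allI impI)
    fix e :: real assume "e > 0"
    then obtain n :: nat where "n > 0" "inverse (real n) < e"
      using ex_inverse_of_nat_less[OF \<open>e > 0\<close>] by blast
    moreover have "1 / real (n + 2) \<le> 1 / real n"
      using \<open>n > 0\<close> by (intro frac_le) auto
    ultimately have "1 / real (n + 2) < e" by (simp add: inverse_eq_divide)
    moreover have "x (k, n + 2) \<in> ball (p k) (1 / real (n + 2)) - {p k}"
      using x[of "(k, n + 2)"] unfolding C_def by simp
    ultimately show "\<exists>y\<in>x ` ({k} \<times> UNIV). y \<noteq> p k \<and> dist y (p k) < e"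
      by (auto simp: dist_commute intro!: bexI[of _ "x (k, n + 2)"])
  qed
  moreover have "range x \<subseteq> Q01"
  proof
    fix q assume "q \<in> range x"
    then obtain k m where "q = x (k,m)" by (metis rangeE surj_pair)
    then show "q \<in> Q01" using xD DQ by blast
  qed
  moreover have "d \<le> dist (x (k,0)) (x (k,1))" for k
    using sep x[of "(k,0)"] x[of "(k,1)"] unfolding C_def by simp
  ultimately have "x \<in> Xset" using Xset_memberI \<open>inj x\<close> \<open>d > 0\<close> \<open>inj p\<close> by blast
  then show ?thesis using xD by (rule that)
qed

lemma conv_plus_contains_Xset_range:
  assumes "B \<subseteq> Q01" and "B \<notin> conv"
  obtains y where "y \<in> Xset" and "range y \<subseteq> B"
proof -
  have limpts: "infinite {q. q islimpt B}" using assms conv_iff_finite_limpts by blast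
  then obtain a where a: "a islimpt B" using infinite_imp_nonempty by blast
  have "infinite ({q. q islimpt B} - {a})" using limpts by simp
  then obtain b where b: "b islimpt B" "b \<noteq> a" using infinite_imp_nonempty by blast
  define d where "d = dist a b / 3"
  have "d > 0" using b(2) unfolding d_def by simp
  have near: "infinite (B \<inter> ball c d)" if "c islimpt B" for c
    using that \<open>d > 0\<close> unfolding islimpt_eq_infinite_ball by blast
  have sep: "d \<le> dist u v" if "u \<in> ball a d" and "v \<in> ball b d" for u v
  proof -
    have "dist a b \<le> dist a u + dist u v + dist v b"
      using dist_triangle[of a b u] dist_triangle[of u b v] by linarith
    moreover have "dist a u < d" "dist v b < d" using that by (auto simp: dist_commute)
    ultimately show ?thesis unfolding d_def by linarith
  qed
  obtain y where yX: "y \<in> Xset" and yB: "\<And>k m. y (k,m) \<in> B"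
    using Xset_witness[of "\<lambda>k. B", OF assms(1) limpts near[OF a] near[OF b(1)] \<open>d > 0\<close> sep]
    by blast
  have "range y \<subseteq> B" using yB by (simp add: image_subset_iff split_paired_All)
  with yX show ?thesis by (rule that)
qed

lemma Xset_element_with_concentrating_image:
  assumes fQ: "\<And>l. l \<in> Q01 \<Longrightarrow> f l \<in> Q01"
  obtains y c1 c2 where "y \<in> Xset"
    and "\<And>m. f ` tail_img y m \<subseteq> ball c1 (1 / Suc m) \<union> ball c2 (1 / Suc m)"
proof -
  define Lo :: "real set" where "Lo = {0..1/3} \<inter> \<rat>"
  define Hi :: "real set" where "Hi = {2/3..1} \<inter> \<rat>"
  have "Lo \<subseteq> Q01" "Hi \<subseteq> Q01" unfolding Lo_def Hi_def Q01_def by auto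
  then have "f ` Lo \<subseteq> {0..1}" "f ` Hi \<subseteq> {0..1}" using fQ unfolding Q01_def by auto
  moreover have "infinite {q. q islimpt Lo}" "infinite {q. q islimpt Hi}"
    unfolding Lo_def Hi_def by (simp_all add: infinite_limpts_Icc_Int_Rats)
  ultimately obtain c1 c2
    where c1: "\<And>r. r > 0 \<Longrightarrow> infinite {q. q islimpt (Lo \<inter> f -` ball c1 r)}"
      and c2: "\<And>r. r > 0 \<Longrightarrow> infinite {q. q islimpt (Hi \<inter> f -` ball c2 r)}"
    using limpts_concentrate[OF compact_Icc] by metis
  define r :: "nat \<Rightarrow> real" where "r k = 1 / Suc k" for k
  define D where "D k = (Lo \<inter> f -` ball c1 (r k)) \<union> (Hi \<inter> f -` ball c2 (r k))" for k
  have r: "r k > 0" for k unfolding r_def by simp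
  obtain y where "y \<in> Xset" and yD: "\<And>k m. y (k,m) \<in> D k"
  proof (rule Xset_witness[of D Lo Hi "1/3"])
    fix k
    show "D k \<subseteq> Q01" using \<open>Lo \<subseteq> Q01\<close> \<open>Hi \<subseteq> Q01\<close> unfolding D_def by blast
    have "{q. q islimpt (Lo \<inter> f -` ball c1 (r k))} \<subseteq> {q. q islimpt D k}"
      unfolding D_def using islimpt_Un by blast
    then show "infinite {q. q islimpt D k}" using c1[OF r] finite_subset by blast
    have "infinite (Lo \<inter> f -` ball c1 (r k))" using c1[OF r] by (rule infinite_if_infinite_limpts)
    then show "infinite (D k \<inter> Lo)" unfolding D_def by (rule infinite_super[rotated]) blast
    have "infinite (Hi \<inter> f -` ball c2 (r k))" using c2[OF r] by (rule infinite_if_infinite_limpts)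
    then show "infinite (D k \<inter> Hi)" unfolding D_def by (rule infinite_super[rotated]) blast
  next
    fix u v assume "u \<in> Lo" "v \<in> Hi"
    then show "1/3 \<le> dist u v" unfolding Lo_def Hi_def dist_real_def by auto
  qed (auto intro: that)
  have "f ` tail_img y m \<subseteq> ball c1 (r m) \<union> ball c2 (r m)" for m
  proof
    fix w assume "w \<in> f ` tail_img y m"
    then obtain k j where "m < k" "w = f (y (k,j))" unfolding tail_img_def by auto
    moreover have "r k \<le> r m" using \<open>m < k\<close> unfolding r_def by (simp add: frac_le)
    ultimately show "w \<in> ball c1 (r m) \<union> ball c2 (r m)" using yD[of k j] unfolding D_def by auto
  qed
  with \<open>y \<in> Xset\<close> show ?thesis unfolding r_def by (rule that)
qed

section \<open>The Katetov comparison\<close>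

lemma rho01_Diff:
  assumes ad: "almost_disjoint_family A" and "finite K"
  shows "rho01 A x (A a - K) = tail_img (x a) (max0 (A a \<inter> K))"
proof -
  have unique: "b = a" if "\<exists>K'. finite K' \<and> A a - K = A b - K'" for b
  proof (rule ccontr)
    assume "b \<noteq> a"
    then have "finite (A a \<inter> A b)" using ad unfolding almost_disjoint_family_def by simp
    moreover have "A a \<subseteq> (A a \<inter> A b) \<union> K" using that by auto
    ultimately have "finite (A a)" using \<open>finite K\<close> by (meson finite_UnI finite_subset)
    then show False using ad unfolding almost_disjoint_family_def by simp
  qed
  have "(SOME b. \<exists>K'. finite K' \<and> A a - K = A b - K') = a"
    using \<open>finite K\<close> unique by (intro some_equality) auto
  then show ?thesis unfolding rho01_def Let_def by (simp add: Diff_Diff_Int)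
qed

lemma rho01_Diff_singleton:
  assumes "almost_disjoint_family A" and "m \<in> A a"
  shows "rho01 A x (A a - {m}) = tail_img (x a) m"
  using rho01_Diff[OF assms(1), of "{m}"] assms(2) by (simp add: max0_def)

lemma tail_img_disjoint_finite:
  assumes "inj y" and "finite K"
  obtains N where "\<And>m. N \<le> m \<Longrightarrow> tail_img y m \<inter> K = {}"
proof -
  have "finite (fst ` (y -` K))" using finite_vimageI[OF assms(2,1)] by (rule finite_imageI)
  then obtain N where N: "\<forall>k\<in>fst ` (y -` K). k \<le> N"
    unfolding finite_nat_set_iff_bounded_le ..
  have "tail_img y m \<inter> K = {}" if "N \<le> m" for m
  proof -
    have "y (k, j) \<notin> K" if "m < k" for k j
    proof
      assume "y (k, j) \<in> K"
      then have "k \<le> N" using N by force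
      with \<open>N \<le> m\<close> \<open>m < k\<close> show False by simp
    qed
    then show ?thesis unfolding tail_img_def by auto
  qed
  then show ?thesis by (rule that)
qed

lemma katetov_rho01_le_rho_conv:
  assumes ad: "almost_disjoint_family A" and bij: "bij_betw x UNIV Xset"
  shows "katetov_le (rho01 A x) (Abar A) (UNIV :: nat set) Q01 rho_conv conv_plus Q01 Q01"
  unfolding katetov_le_def
proof (intro exI[of _ id] conjI ballI)
  fix S1 assume "S1 \<in> conv_plus"
  then obtain y where "y \<in> Xset" and yS1: "range y \<subseteq> S1"
    using conv_plus_contains_Xset_range unfolding conv_plus_def by blast
  then obtain \<alpha> where y: "y = x \<alpha>" using bij bij_betw_imp_surj_on by blast
  have "inj y" using \<open>y \<in> Xset\<close> unfolding Xset_def by blast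
  have "infinite (A \<alpha>)" using ad unfolding almost_disjoint_family_def by blast
  show "\<exists>S2\<in>Abar A. \<forall>K1. finite K1 \<and> K1 \<subseteq> Q01 \<longrightarrow>
          (\<exists>K2. finite K2 \<and> K2 \<subseteq> UNIV \<and> rho01 A x (S2 - K2) \<subseteq> id ` rho_conv (S1 - K1))"
  proof (intro bexI[of _ "A \<alpha>"] allI impI)
    show "A \<alpha> \<in> Abar A" unfolding Abar_def by blast
    fix K1 :: "real set" assume "finite K1 \<and> K1 \<subseteq> Q01"
    then obtain N where N: "\<And>m. N \<le> m \<Longrightarrow> tail_img y m \<inter> K1 = {}"
      using tail_img_disjoint_finite[OF \<open>inj y\<close>] by blast
    have "\<exists>m\<ge>N. m \<in> A \<alpha>"
      using \<open>infinite (A \<alpha>)\<close> by (simp add: infinite_nat_iff_unbounded_le)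
    then obtain m where "N \<le> m" "m \<in> A \<alpha>" by blast
    have "rho01 A x (A \<alpha> - {m}) = tail_img y m"
      using rho01_Diff_singleton[OF ad \<open>m \<in> A \<alpha>\<close>] y by simp
    moreover have "tail_img y m \<subseteq> S1" using yS1 unfolding tail_img_def by auto
    moreover have "tail_img y m \<inter> K1 = {}" using N \<open>N \<le> m\<close> .
    ultimately have "rho01 A x (A \<alpha> - {m}) \<subseteq> S1 - K1" by blast
    then show "\<exists>K2. finite K2 \<and> K2 \<subseteq> UNIV \<and> rho01 A x (A \<alpha> - K2) \<subseteq> id ` rho_conv (S1 - K1)"
      unfolding rho_conv_def by (intro exI[of _ "{m}"]) simp
  qed
qed simp

lemma not_katetov_rho_conv_le_rho01:
  assumes ad: "almost_disjoint_family A" and bij: "bij_betw x UNIV Xset"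
  shows "\<not> katetov_le rho_conv conv_plus Q01 Q01 (rho01 A x) (Abar A) (UNIV :: nat set) Q01"
proof
  assume "katetov_le rho_conv conv_plus Q01 Q01 (rho01 A x) (Abar A) (UNIV :: nat set) Q01"
  then obtain f where fQ: "\<forall>l\<in>Q01. f l \<in> Q01"
    and reduce: "\<forall>S1\<in>Abar A. \<exists>S2\<in>conv_plus. \<forall>K1. finite K1 \<and> K1 \<subseteq> UNIV \<longrightarrow>
            (\<exists>K2. finite K2 \<and> K2 \<subseteq> Q01 \<and> rho_conv (S2 - K2) \<subseteq> f ` rho01 A x (S1 - K1))"
    unfolding katetov_le_def by blast
  obtain y c1 c2 where "y \<in> Xset"
    and shrink: "\<And>m. f ` tail_img y m \<subseteq> ball c1 (1 / Suc m) \<union> ball c2 (1 / Suc m)"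
    using Xset_element_with_concentrating_image[of f] fQ by metis
  then obtain \<alpha> where y: "y = x \<alpha>" using bij bij_betw_imp_surj_on by blast
  have "A \<alpha> \<in> Abar A" unfolding Abar_def by blast
  obtain S2 where "S2 \<in> conv_plus" and S2: "\<forall>K1. finite K1 \<and> K1 \<subseteq> UNIV \<longrightarrow>
      (\<exists>K2. finite K2 \<and> K2 \<subseteq> Q01 \<and> rho_conv (S2 - K2) \<subseteq> f ` rho01 A x (A \<alpha> - K1))"
    using bspec[OF reduce \<open>A \<alpha> \<in> Abar A\<close>] by (rule bexE)
  have "infinite (A \<alpha>)" using ad unfolding almost_disjoint_family_def by blast
  have covered: "\<exists>K. finite K \<and> S2 - K \<subseteq> (\<Union>c\<in>{c1, c2}. ball c e)" if "e > 0" for e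
  proof -
    obtain n :: nat where "inverse (Suc n) < e" using reals_Archimedean[OF \<open>e > 0\<close>] by blast
    have "\<exists>m\<ge>n. m \<in> A \<alpha>"
      using \<open>infinite (A \<alpha>)\<close> by (simp add: infinite_nat_iff_unbounded_le)
    then obtain m where "n \<le> m" "m \<in> A \<alpha>" by blast
    have "1 / Suc m \<le> 1 / Suc n" using \<open>n \<le> m\<close> by (intro frac_le) auto
    with \<open>inverse (Suc n) < e\<close> have "1 / Suc m < e" by (simp add: inverse_eq_divide)
    obtain K2 where "finite K2" and "S2 - K2 \<subseteq> f ` rho01 A x (A \<alpha> - {m})"
      using S2 unfolding rho_conv_def by blast
    moreover have "rho01 A x (A \<alpha> - {m}) = tail_img y m"
      using rho01_Diff_singleton[OF ad \<open>m \<in> A \<alpha>\<close>] y by simp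
    ultimately show ?thesis using shrink[of m] \<open>1 / Suc m < e\<close> by fastforce
  qed
  have "S2 \<subseteq> Q01" "S2 \<notin> conv" using \<open>S2 \<in> conv_plus\<close> unfolding conv_plus_def by auto
  moreover have "{q. q islimpt S2} \<subseteq> {c1, c2}"
  proof
    fix q assume "q \<in> {q. q islimpt S2}"
    show "q \<in> {c1, c2}"
    proof (rule limpt_in_closed_if_almost_covered)
      show "closed {c1, c2}" by simp
      show "\<exists>K. finite K \<and> S2 - K \<subseteq> (\<Union>c\<in>{c1, c2}. ball c e)" if "e > 0" for e
        using that by (rule covered)
      show "q islimpt S2" using \<open>q \<in> {q. q islimpt S2}\<close> by simp
    qed
  qed
  ultimately show False using conv_iff_finite_limpts finite_subset by blast
qed

theorem theorem6p8:
  fixes A :: "real \<Rightarrow> nat set" and x :: "real \<Rightarrow> nat \<times> nat \<Rightarrow> real"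
  assumes "almost_disjoint_family A"
    and "bij_betw x UNIV Xset"
  shows "katetov_le (rho01 A x) (Abar A) (UNIV :: nat set) Q01 rho_conv conv_plus Q01 Q01
       \<and> \<not> katetov_le rho_conv conv_plus Q01 Q01 (rho01 A x) (Abar A) (UNIV :: nat set) Q01"
  using katetov_rho01_le_rho_conv[OF assms] not_katetov_rho_conv_le_rho01[OF assms] by blast

end
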